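(* Fix constants $\gamma\in(0,1]$, $c_1>0$, $K\ge1$, $K'\ge1$. There exists $L_0$ depending only on these constants such that the following holds for every $L\ge L_0$. Let $d_0,\dots,d_L$ be positive integers, $X\in\mathbb{R}^{d_0\times n}$, $Y\in\mathbb{R}^{d_L\times n}$ with $K^{-1}\le\|X\|_F\le K$ and $K^{-1}\le\|Y\|_F\le K$, and let $\alpha>0$, $\sigma_1,\dots,\sigma_L>0$ satisfy $\beta:=\alpha\prod_{i=1}^L(\sqrt{d_i}\sigma_i)\le L^K$. Let $\ell(W_1,\dots,W_L)=\frac12\|\alpha W_L\cdots W_1X-Y\|_F^2$ for $W_i\in\mathbb{R}^{d_i\times d_{i-1}}$. Suppose matrices $W_1,\dots,W_L$ are such that $A_i=W_i/(\sqrt{d_i}\sigma_i)$ satisfy $\|A_{j:i}\|\le K'L^3$ for all $1\le i\le j\le L$ and $\|A_{j:i}\|\le K'e^{-c_1L^\gamma}$ for all $1\le i\le j\le L$ with $j-i\ge L/4$, where $A_{j:i}=A_j\cdots A_i$ and $A_{i-1:i}=I$. Then $$0.4\|Y\|_F^2<\ell(W_1,\dots,W_L)<0.6\|Y\|_F^2,\qquad \|\nabla_{W_i}\ell(W_1,\dots,W_L)\|\le(\sqrt{d_i}\sigma_i)^{-1}e^{-0.9c_1L^\gamma}\ \ \forall i\in[L].$$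
   Context: $\|\cdot\|$ is the spectral norm, $\|\cdot\|_F$ the Frobenius norm; $[L]=\{1,\dots,L\}$. *)

theory Defs
  imports Complex_Main "Jordan_Normal_Form.Matrix"
begin

definition vnorm :: "real vec \<Rightarrow> real" where
  "vnorm v = sqrt (\<Sum>k<dim_vec v. (v $ k)^2)"

definition frob_norm :: "real mat \<Rightarrow> real" where
  "frob_norm M = sqrt (\<Sum>a<dim_row M. \<Sum>b<dim_col M. (M $$ (a,b))^2)"

definition spec_norm :: "real mat \<Rightarrow> real" where
  "spec_norm M = Sup {vnorm (M *\<^sub>v v) | v. v \<in> carrier_vec (dim_col M) \<and> vnorm v \<le> 1}"

text \<open>seg_prod A n0 i k = A (i+k-1) * ... * A i (k factors); for k = 0 it is the
  identity of size n0.  So A_{j:i} = seg_prod A (d (i-1)) i (j+1-i).\<close>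
primrec seg_prod :: "(nat \<Rightarrow> real mat) \<Rightarrow> nat \<Rightarrow> nat \<Rightarrow> nat \<Rightarrow> real mat" where
  "seg_prod A n0 i 0 = 1\<^sub>m n0"
| "seg_prod A n0 i (Suc k) = A (i + k) * seg_prod A n0 i k"

definition mat_range :: "(nat \<Rightarrow> nat) \<Rightarrow> (nat \<Rightarrow> real mat) \<Rightarrow> nat \<Rightarrow> nat \<Rightarrow> real mat" where
  "mat_range d A j i = seg_prod A (d (i - 1)) i (Suc j - i)"

definition loss :: "nat \<Rightarrow> (nat \<Rightarrow> nat) \<Rightarrow> real \<Rightarrow> real mat \<Rightarrow> real mat \<Rightarrow> (nat \<Rightarrow> real mat) \<Rightarrow> real" where
  "loss L d \<alpha> X Y W = (1/2) * (frob_norm (\<alpha> \<cdot>\<^sub>m (mat_range d W L 1 * X) - Y))^2"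

text \<open>Gradient of the loss with respect to W_i: the d_i x d_{i-1} matrix of partial
  derivatives (SOME D. DERIV f 0 :> D, i.e. deriv f 0) with respect to the entries of W_i.\<close>
definition grad_loss :: "nat \<Rightarrow> (nat \<Rightarrow> nat) \<Rightarrow> real \<Rightarrow> real mat \<Rightarrow> real mat \<Rightarrow> (nat \<Rightarrow> real mat) \<Rightarrow> nat \<Rightarrow> real mat" where
  "grad_loss L d \<alpha> X Y W i = mat (d i) (d (i - 1)) (\<lambda>(a,b).
      SOME D. ((\<lambda>t. loss L d \<alpha> X Y (W(i := mat (d i) (d (i - 1))
                 (\<lambda>p. if p = (a,b) then W i $$ p + t else W i $$ p))))
               has_real_derivative D) (at 0))"

end

theory Submission
  imports Defs "HOL-Analysis.L2_Norm" "HOL-Real_Asymp.Real_Asymp"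
begin

(* Write s_i = sqrt d_i * sigma_i and A_i = W_i / s_i. Every partial product then satisfies
   W_{j:i} = (s_i * ... * s_j) A_{j:i}, so the output alpha W_{L:1} X has Frobenius norm at most
   beta ||A_{L:1}|| ||X||_F <= L^K K' K e^{-c_1 L^gamma}. For large L this is below ||Y||_F / 20,
   which pins the loss between 0.45 and 0.56 times ||Y||_F^2.
   The gradient in W_i is alpha W_{L:i+1}^T (alpha W_{L:1} X - Y) (W_{i-1:1} X)^T, of norm at most
   (beta / s_i) ||A_{L:i+1}|| ||A_{i-1:1}|| 2 K^2. For L >= 6 one of the two segments spans at least
   L/4 indices, so the product of the two norms is at most K'^2 L^3 e^{-c_1 L^gamma}, and the
   polynomial factor 2 L^(K+3) K'^2 K^2 is absorbed by e^{0.1 c_1 L^gamma}. *)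

section \<open>Vector and matrix norms\<close>

lemma vnorm_nonneg: "0 \<le> vnorm v"
  unfolding vnorm_def by (simp add: sum_nonneg)

lemma power2_vnorm: "(vnorm v)^2 = (\<Sum>k<dim_vec v. (v $ k)^2)"
  unfolding vnorm_def by (simp add: sum_nonneg)

lemma power2_vnorm_eq_scalar_prod: "(vnorm v)^2 = v \<bullet> v"
  unfolding power2_vnorm scalar_prod_def by (simp add: atLeast0LessThan power2_eq_square)

lemma vnorm_eq_L2_set: "vnorm v = L2_set (\<lambda>k. v $ k) {..<dim_vec v}"
  unfolding vnorm_def L2_set_def ..

lemma vnorm_smult: "vnorm (c \<cdot>\<^sub>v v) = \<bar>c\<bar> * vnorm v"
proof -
  have "(vnorm (c \<cdot>\<^sub>v v))^2 = (\<bar>c\<bar> * vnorm v)^2"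
    by (simp add: power2_vnorm power_mult_distrib sum_distrib_left)
  then show ?thesis
    by (simp add: power2_eq_iff_nonneg vnorm_nonneg)
qed

lemma vnorm_zero_vec [simp]: "vnorm (0\<^sub>v n) = 0"
  by (simp add: vnorm_def)

lemma vnorm_eq_0_imp_zero_vec:
  assumes "vnorm v = 0"
  shows "v = 0\<^sub>v (dim_vec v)"
proof -
  have "(\<Sum>k<dim_vec v. (v $ k)^2) = 0"
    using assms power2_vnorm[of v] by simp
  then show ?thesis
    by (subst (asm) sum_nonneg_eq_0_iff) (auto intro!: eq_vecI)
qed

lemma abs_scalar_prod_le_vnorm:
  assumes "u \<in> carrier_vec n" "v \<in> carrier_vec n"
  shows "\<bar>u \<bullet> v\<bar> \<le> vnorm u * vnorm v"
proof -
  have "\<bar>u \<bullet> v\<bar> \<le> (\<Sum>k<n. \<bar>u $ k\<bar> * \<bar>v $ k\<bar>)"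
    using assms by (simp add: scalar_prod_def atLeast0LessThan sum_abs[THEN order_trans] abs_mult)
  also have "\<dots> \<le> L2_set (\<lambda>k. u $ k) {..<n} * L2_set (\<lambda>k. v $ k) {..<n}"
    by (rule L2_set_mult_ineq)
  finally show ?thesis
    using assms by (simp add: vnorm_eq_L2_set)
qed

lemma frob_norm_nonneg: "0 \<le> frob_norm M"
  unfolding frob_norm_def by (simp add: sum_nonneg)

lemma power2_frob_norm: "(frob_norm M)^2 = (\<Sum>a<dim_row M. \<Sum>b<dim_col M. (M $$ (a,b))^2)"
  unfolding frob_norm_def by (simp add: sum_nonneg)

lemma power2_frob_norm_cols: "(frob_norm M)^2 = (\<Sum>b<dim_col M. (vnorm (col M b))^2)"
  unfolding power2_frob_norm by (subst sum.swap) (simp add: power2_vnorm)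

lemma frob_norm_eq_L2_set:
  "frob_norm M = L2_set (\<lambda>(a,b). M $$ (a,b)) ({..<dim_row M} \<times> {..<dim_col M})"
  unfolding frob_norm_def L2_set_def
  by (simp only: sum.cartesian_product) (simp add: case_prod_unfold)

lemma frob_norm_smult: "frob_norm (c \<cdot>\<^sub>m M) = \<bar>c\<bar> * frob_norm M"
proof -
  have "(frob_norm (c \<cdot>\<^sub>m M))^2 = (\<bar>c\<bar> * frob_norm M)^2"
    by (simp add: power2_frob_norm power_mult_distrib sum_distrib_left)
  then show ?thesis
    by (simp add: power2_eq_iff_nonneg frob_norm_nonneg)
qed

lemma frob_norm_minus_le:
  assumes "M \<in> carrier_mat r c" "N \<in> carrier_mat r c"
  shows "frob_norm (M - N) \<le> frob_norm M + frob_norm N"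
proof -
  let ?I = "{..<r} \<times> {..<c}"
  have "frob_norm (M - N) = L2_set (\<lambda>p. (\<lambda>(a,b). M $$ (a,b)) p + (\<lambda>(a,b). - N $$ (a,b)) p) ?I"
    using assms unfolding frob_norm_eq_L2_set by (intro L2_set_cong) auto
  also have "\<dots> \<le> L2_set (\<lambda>(a,b). M $$ (a,b)) ?I + L2_set (\<lambda>(a,b). - N $$ (a,b)) ?I"
    by (rule L2_set_triangle_ineq)
  also have "L2_set (\<lambda>(a,b). - N $$ (a,b)) ?I = frob_norm N"
    using assms unfolding frob_norm_eq_L2_set L2_set_def by (simp add: case_prod_beta)
  finally show ?thesis
    using assms unfolding frob_norm_eq_L2_set by simp
qed

lemma frob_norm_minus_ge:
  assumes "M \<in> carrier_mat r c" "N \<in> carrier_mat r c"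
  shows "frob_norm N - frob_norm M \<le> frob_norm (M - N)"
proof -
  have "M - (M - N) = N"
    using assms by (intro eq_matI) auto
  then show ?thesis
    using frob_norm_minus_le[OF assms(1) minus_carrier_mat[OF assms(2), of M]] by simp
qed

lemma vnorm_mult_mat_vec_le_frob_norm:
  assumes "v \<in> carrier_vec (dim_col M)"
  shows "vnorm (M *\<^sub>v v) \<le> frob_norm M * vnorm v"
proof -
  have "(vnorm (M *\<^sub>v v))^2 = (\<Sum>a<dim_row M. (row M a \<bullet> v)^2)"
    by (simp add: power2_vnorm)
  also have "\<dots> \<le> (\<Sum>a<dim_row M. (vnorm (row M a) * vnorm v)^2)"
  proof (rule sum_mono)
    fix a
    have "\<bar>row M a \<bullet> v\<bar> \<le> vnorm (row M a) * vnorm v"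
      using assms by (intro abs_scalar_prod_le_vnorm[of _ "dim_col M"]) auto
    then show "(row M a \<bullet> v)^2 \<le> (vnorm (row M a) * vnorm v)^2"
      by (metis abs_le_square_iff abs_of_nonneg mult_nonneg_nonneg vnorm_nonneg)
  qed
  also have "\<dots> = (frob_norm M * vnorm v)^2"
    by (simp add: power2_frob_norm power2_vnorm power_mult_distrib sum_distrib_right)
  finally show ?thesis
    by (meson frob_norm_nonneg mult_nonneg_nonneg power2_le_imp_le vnorm_nonneg)
qed

lemma mult_mat_zero_vec: "M *\<^sub>v 0\<^sub>v (dim_col M) = 0\<^sub>v (dim_row M)"
  by (intro eq_vecI) (auto simp: scalar_prod_def)

lemma bdd_above_spec_norm_set:
  "bdd_above {vnorm (M *\<^sub>v v) | v. v \<in> carrier_vec (dim_col M) \<and> vnorm v \<le> 1}"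
proof (rule bdd_aboveI[of _ "frob_norm M"], clarify)
  fix v :: "real vec"
  assume "v \<in> carrier_vec (dim_col M)" "vnorm v \<le> 1"
  then show "vnorm (M *\<^sub>v v) \<le> frob_norm M"
    by (meson frob_norm_nonneg mult_left_le order_trans vnorm_mult_mat_vec_le_frob_norm)
qed

lemma spec_norm_le:
  assumes "\<And>v. v \<in> carrier_vec (dim_col M) \<Longrightarrow> vnorm v \<le> 1 \<Longrightarrow> vnorm (M *\<^sub>v v) \<le> c"
  shows "spec_norm M \<le> c"
  unfolding spec_norm_def
  using assms by (intro cSup_least) (auto intro!: exI[of _ "0\<^sub>v (dim_col M)"])

lemma vnorm_mult_mat_vec_le_spec_norm:
  assumes "v \<in> carrier_vec (dim_col M)" "vnorm v \<le> 1"
  shows "vnorm (M *\<^sub>v v) \<le> spec_norm M"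
  unfolding spec_norm_def using assms by (intro cSup_upper bdd_above_spec_norm_set) auto

lemma spec_norm_nonneg: "0 \<le> spec_norm M"
  using vnorm_mult_mat_vec_le_spec_norm[of "0\<^sub>v (dim_col M)" M] by (simp add: mult_mat_zero_vec)

lemma vnorm_mult_mat_vec_le:
  assumes v: "v \<in> carrier_vec (dim_col M)"
  shows "vnorm (M *\<^sub>v v) \<le> spec_norm M * vnorm v"
proof (cases "vnorm v = 0")
  case True
  then show ?thesis
    using vnorm_eq_0_imp_zero_vec[OF True] v
    by (metis carrier_vecD mult_mat_zero_vec order.refl mult_zero_right vnorm_zero_vec)
next
  case False
  then have pos: "0 < vnorm v"
    using vnorm_nonneg order_le_less by metis
  have "M *\<^sub>v ((1 / vnorm v) \<cdot>\<^sub>v v) = (1 / vnorm v) \<cdot>\<^sub>v (M *\<^sub>v v)"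
    using v by (intro mult_mat_vec[of M "dim_row M" "dim_col M"]) auto
  moreover have "vnorm (M *\<^sub>v ((1 / vnorm v) \<cdot>\<^sub>v v)) \<le> spec_norm M"
    using v pos by (intro vnorm_mult_mat_vec_le_spec_norm) (auto simp: vnorm_smult)
  ultimately show ?thesis
    using pos by (simp add: vnorm_smult divide_le_eq mult.commute)
qed

lemma spec_norm_le_frob_norm: "spec_norm M \<le> frob_norm M"
  by (rule spec_norm_le)
     (meson frob_norm_nonneg mult_left_le order_trans vnorm_mult_mat_vec_le_frob_norm)

lemma spec_norm_one_le: "spec_norm (1\<^sub>m n) \<le> 1"
  by (rule spec_norm_le) simp

lemma spec_norm_smult_le: "spec_norm (c \<cdot>\<^sub>m M) \<le> \<bar>c\<bar> * spec_norm M"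
proof (rule spec_norm_le)
  fix v
  assume v: "v \<in> carrier_vec (dim_col (c \<cdot>\<^sub>m M))" "vnorm v \<le> 1"
  have "(c \<cdot>\<^sub>m M) *\<^sub>v v = c \<cdot>\<^sub>v (M *\<^sub>v v)"
    using v by (intro eq_vecI) (auto simp: scalar_prod_def sum_distrib_left ac_simps)
  then have "vnorm ((c \<cdot>\<^sub>m M) *\<^sub>v v) = \<bar>c\<bar> * vnorm (M *\<^sub>v v)"
    by (simp add: vnorm_smult)
  also have "\<dots> \<le> \<bar>c\<bar> * spec_norm M"
    using v by (intro mult_left_mono vnorm_mult_mat_vec_le_spec_norm) auto
  finally show "vnorm ((c \<cdot>\<^sub>m M) *\<^sub>v v) \<le> \<bar>c\<bar> * spec_norm M" .
qed

lemma spec_norm_mult_le: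
  assumes A: "A \<in> carrier_mat n1 n2" and B: "B \<in> carrier_mat n2 n3"
  shows "spec_norm (A * B) \<le> spec_norm A * spec_norm B"
proof (rule spec_norm_le)
  fix v
  assume v: "v \<in> carrier_vec (dim_col (A * B))" "vnorm v \<le> 1"
  then have v3: "v \<in> carrier_vec n3"
    using B by simp
  have "vnorm ((A * B) *\<^sub>v v) = vnorm (A *\<^sub>v (B *\<^sub>v v))"
    using A B v3 by (simp add: assoc_mult_mat_vec)
  also have "\<dots> \<le> spec_norm A * vnorm (B *\<^sub>v v)"
    using A B v3 by (intro vnorm_mult_mat_vec_le) auto
  also have "\<dots> \<le> spec_norm A * spec_norm B"
    using B v by (intro mult_left_mono vnorm_mult_mat_vec_le_spec_norm spec_norm_nonneg) auto
  finally show "vnorm ((A * B) *\<^sub>v v) \<le> spec_norm A * spec_norm B" .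
qed

lemma spec_norm_transpose_le:
  assumes N: "N \<in> carrier_mat r c"
  shows "spec_norm (transpose_mat N) \<le> spec_norm N"
proof (rule spec_norm_le)
  fix w
  assume w: "w \<in> carrier_vec (dim_col (transpose_mat N))" "vnorm w \<le> 1"
  then have wr: "w \<in> carrier_vec r"
    using N by simp
  define u where "u = transpose_mat N *\<^sub>v w"
  have u: "u \<in> carrier_vec c"
    using N wr by (simp add: u_def)
  have "(vnorm u)^2 = w \<bullet> (N *\<^sub>v u)"
    unfolding power2_vnorm_eq_scalar_prod
    using transpose_vec_mult_scalar[OF N u wr] by (simp add: u_def)
  also have "\<dots> \<le> vnorm w * vnorm (N *\<^sub>v u)"
    using N u wr by (intro order_trans[OF abs_ge_self abs_scalar_prod_le_vnorm]) auto
  also have "\<dots> \<le> vnorm (N *\<^sub>v u)"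
    using w(2) by (simp add: mult_left_le_one_le vnorm_nonneg)
  also have "\<dots> \<le> spec_norm N * vnorm u"
    using N u by (intro vnorm_mult_mat_vec_le) auto
  finally have "vnorm u * vnorm u \<le> spec_norm N * vnorm u"
    by (simp add: power2_eq_square)
  then show "vnorm (transpose_mat N *\<^sub>v w) \<le> spec_norm N"
    using spec_norm_nonneg[of N] vnorm_nonneg[of u]
    by (metis mult_right_le_imp_le order_le_less u_def)
qed

lemma frob_norm_mult_le:
  assumes A: "A \<in> carrier_mat n1 n2" and B: "B \<in> carrier_mat n2 n3"
  shows "frob_norm (A * B) \<le> spec_norm A * frob_norm B"
proof -
  have "(frob_norm (A * B))^2 = (\<Sum>b<n3. (vnorm (A *\<^sub>v col B b))^2)"
    using A B by (simp add: power2_frob_norm_cols mult_mat_vec_def)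
  also have "\<dots> \<le> (\<Sum>b<n3. (spec_norm A * vnorm (col B b))^2)"
    using A B by (intro sum_mono power_mono vnorm_mult_mat_vec_le vnorm_nonneg) auto
  also have "\<dots> = (spec_norm A * frob_norm B)^2"
    using B by (simp add: power2_frob_norm_cols power_mult_distrib sum_distrib_left)
  finally show ?thesis
    by (meson frob_norm_nonneg spec_norm_nonneg mult_nonneg_nonneg power2_le_imp_le)
qed

section \<open>Products of consecutive factors\<close>

lemma smult_smult_mat: "a \<cdot>\<^sub>m (b \<cdot>\<^sub>m M) = (a * b) \<cdot>\<^sub>m (M :: 'a :: semigroup_mult mat)"
  by (intro eq_matI) (auto simp: mult.assoc)

lemma one_smult_mat [simp]: "1 \<cdot>\<^sub>m M = (M :: 'a :: monoid_mult mat)"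
  by (intro eq_matI) auto

lemma seg_prod_carrier:
  assumes "1 \<le> i" "\<And>j. i \<le> j \<Longrightarrow> j < i + k \<Longrightarrow> A j \<in> carrier_mat (d j) (d (j - 1))"
  shows "seg_prod A (d (i - 1)) i k \<in> carrier_mat (d (i + k - 1)) (d (i - 1))"
  using assms(2)
proof (induction k)
  case (Suc k)
  have "A (i + k) \<in> carrier_mat (d (i + k)) (d (i + k - 1))"
    using Suc.prems by simp
  from mult_carrier_mat[OF this Suc.IH] Suc.prems show ?case
    by simp
qed (use assms(1) in simp)

lemma seg_prod_add:
  assumes "1 \<le> i" "\<And>j. i \<le> j \<Longrightarrow> j < i + k + m \<Longrightarrow> A j \<in> carrier_mat (d j) (d (j - 1))"
  shows "seg_prod A (d (i - 1)) i (k + m)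
    = seg_prod A (d (i + k - 1)) (i + k) m * seg_prod A (d (i - 1)) i k"
  using assms(2)
proof (induction m)
  case 0
  have "seg_prod A (d (i - 1)) i k \<in> carrier_mat (d (i + k - 1)) (d (i - 1))"
    using 0 by (intro seg_prod_carrier[OF assms(1)]) auto
  then show ?case by simp
next
  case (Suc m)
  have inner: "seg_prod A (d (i - 1)) i k \<in> carrier_mat (d (i + k - 1)) (d (i - 1))"
    using Suc.prems by (intro seg_prod_carrier[OF assms(1)]) auto
  have outer:
    "seg_prod A (d (i + k - 1)) (i + k) m \<in> carrier_mat (d (i + k + m - 1)) (d (i + k - 1))"
    using Suc.prems seg_prod_carrier[where i="i + k" and A=A and d=d and k=m] assms(1) by simp
  have top: "A (i + k + m) \<in> carrier_mat (d (i + k + m)) (d (i + k + m - 1))"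
    using Suc.prems by simp
  have "seg_prod A (d (i - 1)) i (k + Suc m)
      = A (i + k + m) * (seg_prod A (d (i + k - 1)) (i + k) m * seg_prod A (d (i - 1)) i k)"
    using Suc by (simp add: add.assoc)
  also have "\<dots> = seg_prod A (d (i + k - 1)) (i + k) (Suc m) * seg_prod A (d (i - 1)) i k"
    using assoc_mult_mat[OF top outer inner] by simp
  finally show ?case .
qed

lemma seg_prod_smult:
  assumes "1 \<le> i" "\<And>j. i \<le> j \<Longrightarrow> j < i + k \<Longrightarrow> A j \<in> carrier_mat (d j) (d (j - 1))"
  shows "seg_prod (\<lambda>j. c j \<cdot>\<^sub>m A j) (d (i - 1)) i k
    = (\<Prod>j\<in>{i..<i + k}. c j) \<cdot>\<^sub>m seg_prod A (d (i - 1)) i k"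
  using assms(2)
proof (induction k)
  case 0
  then show ?case by (intro eq_matI) auto
next
  case (Suc k)
  have inner: "seg_prod A (d (i - 1)) i k \<in> carrier_mat (d (i + k - 1)) (d (i - 1))"
    using Suc.prems by (intro seg_prod_carrier[OF assms(1)]) auto
  have top: "A (i + k) \<in> carrier_mat (d (i + k)) (d (i + k - 1))"
    using Suc.prems by simp
  have "seg_prod (\<lambda>j. c j \<cdot>\<^sub>m A j) (d (i - 1)) i (Suc k)
      = (c (i + k) \<cdot>\<^sub>m A (i + k)) * ((\<Prod>j\<in>{i..<i + k}. c j) \<cdot>\<^sub>m seg_prod A (d (i - 1)) i k)"
    using Suc by simp
  also have "\<dots> = (c (i + k) * (\<Prod>j\<in>{i..<i + k}. c j)) \<cdot>\<^sub>m (A (i + k) * seg_prod A (d (i - 1)) i k)"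
    unfolding mult_smult_assoc_mat[OF top smult_carrier_mat[OF inner]]
      mult_smult_distrib[OF top inner]
    by (rule smult_smult_mat)
  finally show ?case
    by (simp add: mult.commute)
qed

lemma mat_range_carrier:
  assumes "1 \<le> i" "i \<le> Suc j" "\<And>k. i \<le> k \<Longrightarrow> k \<le> j \<Longrightarrow> A k \<in> carrier_mat (d k) (d (k - 1))"
  shows "mat_range d A j i \<in> carrier_mat (d j) (d (i - 1))"
  using seg_prod_carrier[where i=i and A=A and d=d and k="Suc j - i"] assms
  by (simp add: mat_range_def)

lemma mat_range_empty: "mat_range d A j (Suc j) = 1\<^sub>m (d j)"
  by (simp add: mat_range_def)

lemma mat_range_top: "1 \<le> i \<Longrightarrow> h \<le> i \<Longrightarrow> mat_range d A i h = A i * mat_range d A (i - 1) h"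
  by (simp add: mat_range_def Suc_diff_le)

lemma mat_range_append:
  assumes "1 \<le> h" "h \<le> i" "i \<le> Suc j"
    and "\<And>k. h \<le> k \<Longrightarrow> k \<le> j \<Longrightarrow> A k \<in> carrier_mat (d k) (d (k - 1))"
  shows "mat_range d A j h = mat_range d A j i * mat_range d A (i - 1) h"
  using seg_prod_add[where i=h and A=A and d=d and k="i - h" and m="Suc j - i"] assms
  by (simp add: mat_range_def)

lemma mat_range_rescale:
  assumes "1 \<le> i" "\<And>k. i \<le> k \<Longrightarrow> k \<le> j \<Longrightarrow> W k \<in> carrier_mat (d k) (d (k - 1))"
    and "\<And>k. i \<le> k \<Longrightarrow> k \<le> j \<Longrightarrow> s k \<noteq> 0"
  shows "mat_range d W j i = (\<Prod>k=i..j. s k) \<cdot>\<^sub>m mat_range d (\<lambda>k. (1 / s k) \<cdot>\<^sub>m W k) j i"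
proof -
  have "{i..<i + (Suc j - i)} = {i..j}"
    by auto
  then have "mat_range d (\<lambda>k. (1 / s k) \<cdot>\<^sub>m W k) j i = (\<Prod>k=i..j. 1 / s k) \<cdot>\<^sub>m mat_range d W j i"
    using seg_prod_smult[where i=i and A=W and d=d and k="Suc j - i" and c="\<lambda>k. 1 / s k"] assms
    by (simp add: mat_range_def)
  moreover have "(\<Prod>k=i..j. s k) * (\<Prod>k=i..j. 1 / s k) = 1"
    using assms(3) by (simp add: prod_dividef)
  ultimately show ?thesis
    by (simp add: smult_smult_mat)
qed

lemma seg_prod_cong:
  assumes "\<And>j. i \<le> j \<Longrightarrow> j < i + k \<Longrightarrow> A j = B j"
  shows "seg_prod A n i k = seg_prod B n i k"
  using assms by (induction k) auto

lemma mat_range_fun_upd_outside: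
  assumes "i < h \<or> j < i"
  shows "mat_range d (A(i := M)) j h = mat_range d A j h"
  unfolding mat_range_def using assms by (intro seg_prod_cong) auto

lemma mat_range_split:
  assumes "1 \<le> i" "i \<le> L" "\<forall>j\<in>{1..L}. W j \<in> carrier_mat (d j) (d (j - 1))"
  shows "mat_range d W L 1 = mat_range d W L (Suc i) * (W i * mat_range d W (i - 1) 1)"
  using mat_range_append[of 1 "Suc i" L W d] mat_range_top[of i 1 d W] assms by auto

lemma mat_range_split_carrier:
  assumes "1 \<le> i" "i \<le> L" "\<forall>j\<in>{1..L}. W j \<in> carrier_mat (d j) (d (j - 1))"
  shows "mat_range d W L (Suc i) \<in> carrier_mat (d L) (d i)"
    and "mat_range d W (i - 1) 1 \<in> carrier_mat (d (i - 1)) (d 0)"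
  using mat_range_carrier[where i="Suc i" and j=L and A=W and d=d]
    mat_range_carrier[where i=1 and j="i - 1" and A=W and d=d] assms by auto

section \<open>The gradient of the loss\<close>

lemma has_real_derivative_half_power2_frob_norm:
  assumes "M \<in> carrier_mat r c" "G \<in> carrier_mat r c"
  shows "((\<lambda>t. (1/2) * (frob_norm (M + t \<cdot>\<^sub>m G))^2) has_real_derivative
          (\<Sum>p<r. \<Sum>q<c. M $$ (p,q) * G $$ (p,q))) (at 0)"
proof -
  have "(1/2) * (frob_norm (M + t \<cdot>\<^sub>m G))^2 = (1/2) * (\<Sum>p<r. \<Sum>q<c. (M $$ (p,q) + t * G $$ (p,q))^2)"
    for t using assms by (simp add: power2_frob_norm)
  moreover have "((\<lambda>t. (1/2) * (\<Sum>p<r. \<Sum>q<c. (M $$ (p,q) + t * G $$ (p,q))^2)) has_real_derivative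
      (\<Sum>p<r. \<Sum>q<c. M $$ (p,q) * G $$ (p,q))) (at 0)"
    by (auto intro!: derivative_eq_intros simp: sum_distrib_left mult.commute)
  ultimately show ?thesis
    by simp
qed

lemma index_mult_unit_mat_mult:
  fixes B Z :: "'a :: comm_semiring_1 mat"
  assumes "B \<in> carrier_mat l r" "Z \<in> carrier_mat m n" "p < l" "q < n" "a < r" "b < m"
  shows "(B * (mat r m (\<lambda>x. if x = (a,b) then 1 else 0) * Z)) $$ (p,q) = B $$ (p,a) * Z $$ (b,q)"
proof -
  have ite: "(if P then 1 else 0) * x = (if P then x else 0)" for P and x :: 'a
    by simp
  have "(mat r m (\<lambda>x. if x = (a,b) then 1 else 0) * Z) $$ (k,q) = (if k = a then Z $$ (b,q) else 0)"
    if "k < r" for k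
    using assms that by (auto simp: scalar_prod_def ite sum.delta' cong: if_cong)
  then have "(B * (mat r m (\<lambda>x. if x = (a,b) then 1 else 0) * Z)) $$ (p,q)
      = (\<Sum>k = 0..<r. B $$ (p,k) * (if k = a then Z $$ (b,q) else 0))"
    using assms by (auto simp: scalar_prod_def intro!: sum.cong)
  also have "\<dots> = B $$ (p,a) * Z $$ (b,q)"
    using assms by (simp add: if_distrib sum.delta' cong: if_cong)
  finally show ?thesis .
qed

lemma loss_update_add:
  assumes i: "1 \<le> i" "i \<le> L" and W: "\<forall>j\<in>{1..L}. W j \<in> carrier_mat (d j) (d (j - 1))"
    and X: "X \<in> carrier_mat (d 0) n" and Y: "Y \<in> carrier_mat (d L) n"
    and E: "E \<in> carrier_mat (d i) (d (i - 1))"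
  shows "loss L d \<alpha> X Y (W(i := W i + t \<cdot>\<^sub>m E)) = (1/2) * (frob_norm
    ((\<alpha> \<cdot>\<^sub>m (mat_range d W L 1 * X) - Y)
     + t \<cdot>\<^sub>m (\<alpha> \<cdot>\<^sub>m (mat_range d W L (Suc i) * (E * (mat_range d W (i - 1) 1 * X))))))^2"
proof -
  define B where "B = mat_range d W L (Suc i)"
  define C where "C = mat_range d W (i - 1) 1"
  define V where "V = W(i := W i + t \<cdot>\<^sub>m E)"
  have Wi: "W i \<in> carrier_mat (d i) (d (i - 1))"
    using W i by simp
  have B: "B \<in> carrier_mat (d L) (d i)" and C: "C \<in> carrier_mat (d (i - 1)) (d 0)"
    unfolding B_def C_def using mat_range_split_carrier[OF i W] by auto
  have BEC: "B * (E * C) \<in> carrier_mat (d L) (d 0)"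
    using B C E by simp
  have V: "\<forall>j\<in>{1..L}. V j \<in> carrier_mat (d j) (d (j - 1))"
    using W E by (simp add: V_def)
  have "mat_range d V L (Suc i) = B" "mat_range d V (i - 1) 1 = C"
    unfolding V_def B_def C_def by (rule mat_range_fun_upd_outside; use i in simp)+
  moreover have "V i = W i + t \<cdot>\<^sub>m E"
    by (simp add: V_def)
  ultimately have "mat_range d V L 1 = B * ((W i + t \<cdot>\<^sub>m E) * C)"
    using mat_range_split[OF i V] by simp
  also have "\<dots> = B * (W i * C) + t \<cdot>\<^sub>m (B * (E * C))"
    using B C E Wi
    by (simp add: add_mult_distrib_mat[OF Wi _ C] mult_smult_assoc_mat[OF E C]
        mult_add_distrib_mat[OF B mult_carrier_mat[OF Wi C]
          smult_carrier_mat[OF mult_carrier_mat[OF E C]]]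
        mult_smult_distrib[OF B mult_carrier_mat[OF E C]])
  finally have "mat_range d V L 1 * X = (B * (W i * C) + t \<cdot>\<^sub>m (B * (E * C))) * X"
    by simp
  also have "\<dots> = B * (W i * C) * X + t \<cdot>\<^sub>m (B * (E * C) * X)"
    using B C E Wi X
    by (simp add: add_mult_distrib_mat[OF _ smult_carrier_mat[OF BEC] X]
        mult_smult_assoc_mat[OF BEC X])
  also have "B * (E * C) * X = B * (E * (C * X))"
    using B C E X by (simp add: assoc_mult_mat[OF B _ X] assoc_mult_mat[OF E C X])
  also have "B * (W i * C) = mat_range d W L 1"
    using mat_range_split[OF i W] by (simp add: B_def C_def)
  finally have "mat_range d V L 1 * X = mat_range d W L 1 * X + t \<cdot>\<^sub>m (B * (E * (C * X)))" .
  then have "\<alpha> \<cdot>\<^sub>m (mat_range d V L 1 * X) - Y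
      = (\<alpha> \<cdot>\<^sub>m (mat_range d W L 1 * X) - Y) + t \<cdot>\<^sub>m (\<alpha> \<cdot>\<^sub>m (B * (E * (C * X))))"
    using B C E X Y mat_range_carrier[where i=1 and j=L and A=W and d=d] W i
    by (intro eq_matI) (auto simp: algebra_simps)
  then show ?thesis
    by (simp add: loss_def V_def B_def C_def)
qed

lemma grad_loss_eq:
  assumes i: "1 \<le> i" "i \<le> L" and W: "\<forall>j\<in>{1..L}. W j \<in> carrier_mat (d j) (d (j - 1))"
    and X: "X \<in> carrier_mat (d 0) n" and Y: "Y \<in> carrier_mat (d L) n"
  shows "grad_loss L d \<alpha> X Y W i = \<alpha> \<cdot>\<^sub>m (transpose_mat (mat_range d W L (Suc i))
    * (\<alpha> \<cdot>\<^sub>m (mat_range d W L 1 * X) - Y) * transpose_mat (mat_range d W (i - 1) 1 * X))"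
proof -
  define B where "B = mat_range d W L (Suc i)"
  define Z where "Z = mat_range d W (i - 1) 1 * X"
  define R where "R = \<alpha> \<cdot>\<^sub>m (mat_range d W L 1 * X) - Y"
  have B: "B \<in> carrier_mat (d L) (d i)" and Z: "Z \<in> carrier_mat (d (i - 1)) n"
    unfolding B_def Z_def using mat_range_split_carrier[OF i W] X by auto
  have R: "R \<in> carrier_mat (d L) n"
    unfolding R_def using Y by (rule minus_carrier_mat)
  have partial: "grad_loss L d \<alpha> X Y W i $$ (a,b)
      = (\<Sum>p<d L. \<Sum>q<n. R $$ (p,q) * (\<alpha> * (B $$ (p,a) * Z $$ (b,q))))"
    if ab: "a < d i" "b < d (i - 1)" for a b
  proof -
    define E where "E = mat (d i) (d (i - 1)) (\<lambda>x. if x = (a,b) then 1 else (0::real))"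
    have E: "E \<in> carrier_mat (d i) (d (i - 1))"
      by (simp add: E_def)
    have G: "\<alpha> \<cdot>\<^sub>m (B * (E * Z)) \<in> carrier_mat (d L) n"
      using B E Z by simp
    have "(\<alpha> \<cdot>\<^sub>m (B * (E * Z))) $$ (p,q) = \<alpha> * (B $$ (p,a) * Z $$ (b,q))"
      if "p < d L" "q < n" for p q
      using index_mult_unit_mat_mult[OF B Z that ab] G that unfolding E_def
      by (subst index_smult_mat) auto
    then have "((\<lambda>t. loss L d \<alpha> X Y (W(i := W i + t \<cdot>\<^sub>m E))) has_real_derivative
        (\<Sum>p<d L. \<Sum>q<n. R $$ (p,q) * (\<alpha> * (B $$ (p,a) * Z $$ (b,q))))) (at 0)"
      unfolding loss_update_add[OF i W X Y E] B_def[symmetric] Z_def[symmetric] R_def[symmetric]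
      using has_real_derivative_half_power2_frob_norm[OF R G] by simp
    moreover have "mat (d i) (d (i - 1)) (\<lambda>x. if x = (a,b) then W i $$ x + t else W i $$ x)
        = W i + t \<cdot>\<^sub>m E" for t
      using W i by (intro eq_matI) (auto simp: E_def)
    ultimately show ?thesis
      unfolding grad_loss_def using ab DERIV_unique by (auto intro!: some_equality)
  qed
  have "grad_loss L d \<alpha> X Y W i = \<alpha> \<cdot>\<^sub>m (transpose_mat B * R * transpose_mat Z)"
  proof (rule eq_matI)
    fix a b
    assume "a < dim_row (\<alpha> \<cdot>\<^sub>m (transpose_mat B * R * transpose_mat Z))"
      "b < dim_col (\<alpha> \<cdot>\<^sub>m (transpose_mat B * R * transpose_mat Z))"
    then have ab: "a < d i" "b < d (i - 1)"
      using B Z by auto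
    then have "(\<alpha> \<cdot>\<^sub>m (transpose_mat B * R * transpose_mat Z)) $$ (a,b)
        = \<alpha> * (\<Sum>p<d L. B $$ (p, a) * (\<Sum>q<n. R $$ (p, q) * Z $$ (b, q)))"
      using B R Z by (simp add: scalar_prod_def atLeast0LessThan)
    then show "grad_loss L d \<alpha> X Y W i $$ (a,b)
        = (\<alpha> \<cdot>\<^sub>m (transpose_mat B * R * transpose_mat Z)) $$ (a,b)"
      using partial[OF ab] by (simp add: sum_distrib_left ac_simps)
  qed (use B Z in \<open>auto simp: grad_loss_def\<close>)
  then show ?thesis
    by (simp add: B_def Z_def R_def)
qed

lemma spec_norm_grad_loss_le:
  assumes i: "1 \<le> i" "i \<le> L" and W: "\<forall>j\<in>{1..L}. W j \<in> carrier_mat (d j) (d (j - 1))"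
    and X: "X \<in> carrier_mat (d 0) n" and Y: "Y \<in> carrier_mat (d L) n" and \<alpha>: "0 \<le> \<alpha>"
  shows "spec_norm (grad_loss L d \<alpha> X Y W i)
    \<le> \<alpha> * (spec_norm (mat_range d W L (Suc i)) * frob_norm (\<alpha> \<cdot>\<^sub>m (mat_range d W L 1 * X) - Y))
        * (spec_norm (mat_range d W (i - 1) 1) * frob_norm X)"
proof -
  define B where "B = mat_range d W L (Suc i)"
  define C where "C = mat_range d W (i - 1) 1"
  define R where "R = \<alpha> \<cdot>\<^sub>m (mat_range d W L 1 * X) - Y"
  have B: "B \<in> carrier_mat (d L) (d i)" and C: "C \<in> carrier_mat (d (i - 1)) (d 0)"
    unfolding B_def C_def using mat_range_split_carrier[OF i W] by auto
  have R: "R \<in> carrier_mat (d L) n"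
    unfolding R_def using Y by (rule minus_carrier_mat)
  have "spec_norm (grad_loss L d \<alpha> X Y W i)
      \<le> \<alpha> * spec_norm (transpose_mat B * R * transpose_mat (C * X))"
    unfolding grad_loss_eq[OF i W X Y] B_def C_def R_def
    using spec_norm_smult_le[of \<alpha>] \<alpha> by (simp add: abs_of_nonneg)
  also have "\<dots> \<le> \<alpha> * (spec_norm (transpose_mat B * R) * spec_norm (transpose_mat (C * X)))"
    using B C R X \<alpha> by (intro mult_left_mono spec_norm_mult_le) auto
  also have "\<dots> \<le> \<alpha> * ((spec_norm B * frob_norm R) * (spec_norm C * frob_norm X))"
  proof (intro mult_left_mono mult_mono \<alpha>)
    have "spec_norm (transpose_mat B * R) \<le> spec_norm (transpose_mat B) * spec_norm R"
      using B R by (intro spec_norm_mult_le) auto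
    also have "\<dots> \<le> spec_norm B * frob_norm R"
      by (intro mult_mono spec_norm_transpose_le[OF B] spec_norm_le_frob_norm spec_norm_nonneg)
    finally show "spec_norm (transpose_mat B * R) \<le> spec_norm B * frob_norm R" .
    have "spec_norm (transpose_mat (C * X)) \<le> spec_norm C * spec_norm X"
      using spec_norm_transpose_le[OF mult_carrier_mat[OF C X]] spec_norm_mult_le[OF C X] by simp
    also have "\<dots> \<le> spec_norm C * frob_norm X"
      by (intro mult_left_mono spec_norm_le_frob_norm spec_norm_nonneg)
    finally show "spec_norm (transpose_mat (C * X)) \<le> spec_norm C * frob_norm X" .
  qed (auto intro: mult_nonneg_nonneg spec_norm_nonneg frob_norm_nonneg)
  finally show ?thesis
    by (simp add: B_def C_def R_def mult.assoc)
qed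

lemma half_power2_frob_norm_minus_bounds:
  assumes "M \<in> carrier_mat r c" "Y \<in> carrier_mat r c"
    and "0 < frob_norm Y" "frob_norm M \<le> frob_norm Y / 20"
  shows "0.4 * (frob_norm Y)^2 < (1/2) * (frob_norm (M - Y))^2"
    and "(1/2) * (frob_norm (M - Y))^2 < 0.6 * (frob_norm Y)^2"
proof -
  have "19/20 * frob_norm Y \<le> frob_norm (M - Y)" "frob_norm (M - Y) \<le> 21/20 * frob_norm Y"
    using frob_norm_minus_ge[OF assms(1,2)] frob_norm_minus_le[OF assms(1,2)] assms(4) by auto
  then have "(19/20 * frob_norm Y)^2 \<le> (frob_norm (M - Y))^2"
    "(frob_norm (M - Y))^2 \<le> (21/20 * frob_norm Y)^2"
    using assms(3) frob_norm_nonneg by (auto intro!: power_mono)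
  then have "361/400 * (frob_norm Y)^2 \<le> (frob_norm (M - Y))^2"
    "(frob_norm (M - Y))^2 \<le> 441/400 * (frob_norm Y)^2"
    by (simp_all add: power_divide power_mult_distrib)
  moreover have "0 < (frob_norm Y)^2"
    using assms(3) by simp
  ultimately show "0.4 * (frob_norm Y)^2 < (1/2) * (frob_norm (M - Y))^2"
    and "(1/2) * (frob_norm (M - Y))^2 < 0.6 * (frob_norm Y)^2"
    by linarith+
qed

lemma prod_atLeastAtMost_split_at:
  fixes f :: "nat \<Rightarrow> 'a :: comm_monoid_mult"
  assumes "1 \<le> i" "m \<le> i" "i \<le> n"
  shows "prod f {m..n} = prod f {Suc i..n} * f i * prod f {m..i - 1}"
proof -
  have "{m..n} = {Suc i..n} \<union> insert i {m..i - 1}"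
    using assms by auto
  then have "prod f {m..n} = prod f {Suc i..n} * prod f (insert i {m..i - 1})"
    by (simp only:) (rule prod.union_disjoint; auto)
  also have "prod f (insert i {m..i - 1}) = f i * prod f {m..i - 1}"
    using assms(1) by (intro prod.insert) auto
  finally show ?thesis
    by (simp add: mult.assoc)
qed

lemma spec_norm_complementary_segments_le:
  assumes L: "6 \<le> L" and i: "1 \<le> i" "i \<le> L" and K': "1 \<le> K'"
    and short: "\<And>i j. 1 \<le> i \<Longrightarrow> i \<le> j \<Longrightarrow> j \<le> L \<Longrightarrow> spec_norm (mat_range d A j i) \<le> K' * real L ^ 3"
    and long: "\<And>i j. 1 \<le> i \<Longrightarrow> i \<le> j \<Longrightarrow> j \<le> L \<Longrightarrow> real L / 4 \<le> real (j - i)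
      \<Longrightarrow> spec_norm (mat_range d A j i) \<le> \<eta>"
  shows "spec_norm (mat_range d A L (Suc i)) * spec_norm (mat_range d A (i - 1) 1)
    \<le> K' * real L ^ 3 * \<eta>"
proof -
  have segment: "spec_norm (mat_range d A j h) \<le> K' * real L ^ 3"
    if "1 \<le> h" "h \<le> Suc j" "j \<le> L" for h j
  proof (cases "h \<le> j")
    case False
    with that have "mat_range d A j h = 1\<^sub>m (d j)"
      by (simp add: le_Suc_eq mat_range_empty)
    moreover have "1 * 1 \<le> K' * real L ^ 3"
      using K' L by (intro mult_mono one_le_power) auto
    ultimately show ?thesis
      using spec_norm_one_le[of "d j"] by simp
  qed (use that short in auto)
  have "spec_norm (mat_range d A L 1) \<le> \<eta>"
    using L by (intro long) auto
  then have "0 \<le> \<eta>"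
    using spec_norm_nonneg[of "mat_range d A L 1"] by linarith
  have "i < L \<and> real L / 4 \<le> real (L - Suc i) \<or> 2 \<le> i \<and> real L / 4 \<le> real (i - 1 - 1)"
    using L i by (simp add: of_nat_diff) linarith
  then show ?thesis
  proof
    assume "i < L \<and> real L / 4 \<le> real (L - Suc i)"
    then have "spec_norm (mat_range d A L (Suc i)) \<le> \<eta>"
      by (intro long) auto
    then show ?thesis
      using segment[of 1 "i - 1"] i \<open>0 \<le> \<eta>\<close> spec_norm_nonneg
      by (simp add: mult_mono mult.commute)
  next
    assume "2 \<le> i \<and> real L / 4 \<le> real (i - 1 - 1)"
    then have "spec_norm (mat_range d A (i - 1) 1) \<le> \<eta>"
      using i by (intro long) auto
    moreover have "spec_norm (mat_range d A L (Suc i)) \<le> K' * real L ^ 3"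
      using segment[of "Suc i" L] i by simp
    ultimately show ?thesis
      using spec_norm_nonneg order_trans by (blast intro: mult_mono)
  qed
qed

lemma spec_norm_mat_range_rescale_le:
  assumes "1 \<le> i" "\<And>k. i \<le> k \<Longrightarrow> k \<le> j \<Longrightarrow> W k \<in> carrier_mat (d k) (d (k - 1))"
    and "\<And>k. i \<le> k \<Longrightarrow> k \<le> j \<Longrightarrow> 0 < s k"
  shows "spec_norm (mat_range d W j i)
    \<le> (\<Prod>k=i..j. s k) * spec_norm (mat_range d (\<lambda>k. (1 / s k) \<cdot>\<^sub>m W k) j i)"
proof -
  have "0 < (\<Prod>k=i..j. s k)"
    using assms(3) by (intro prod_pos) auto
  moreover have "mat_range d W j i = (\<Prod>k=i..j. s k) \<cdot>\<^sub>m mat_range d (\<lambda>k. (1 / s k) \<cdot>\<^sub>m W k) j i"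
    using assms by (intro mat_range_rescale) (auto simp: less_imp_neq[THEN not_sym])
  ultimately show ?thesis
    using spec_norm_smult_le by (metis abs_of_pos)
qed

lemma frob_norm_output_le:
  assumes W: "\<forall>j\<in>{1..L}. W j \<in> carrier_mat (d j) (d (j - 1))" and X: "X \<in> carrier_mat (d 0) n"
    and s: "\<forall>j\<in>{1..L}. 0 < s j" and \<alpha>: "0 < \<alpha>" and \<beta>: "\<alpha> * (\<Prod>j=1..L. s j) \<le> b"
  shows "frob_norm (\<alpha> \<cdot>\<^sub>m (mat_range d W L 1 * X))
    \<le> b * spec_norm (mat_range d (\<lambda>k. (1 / s k) \<cdot>\<^sub>m W k) L 1) * frob_norm X"
proof -
  let ?nA = "spec_norm (mat_range d (\<lambda>k. (1 / s k) \<cdot>\<^sub>m W k) L 1)"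
  have "frob_norm (\<alpha> \<cdot>\<^sub>m (mat_range d W L 1 * X))
      \<le> \<alpha> * (spec_norm (mat_range d W L 1) * frob_norm X)"
    using mat_range_carrier[where i=1 and j=L and A=W and d=d] W \<alpha>
    by (simp add: frob_norm_smult frob_norm_mult_le[OF _ X])
  also have "\<dots> \<le> \<alpha> * ((\<Prod>j=1..L. s j) * ?nA * frob_norm X)"
    using W s \<alpha>
    by (intro mult_left_mono mult_right_mono spec_norm_mat_range_rescale_le frob_norm_nonneg) auto
  also have "\<dots> \<le> b * ?nA * frob_norm X"
    using \<beta> by (simp add: mult.assoc[symmetric] mult_right_mono spec_norm_nonneg frob_norm_nonneg)
  finally show ?thesis .
qed

lemma spec_norm_grad_loss_le_rescaled:
  assumes i: "1 \<le> i" "i \<le> L" and W: "\<forall>j\<in>{1..L}. W j \<in> carrier_mat (d j) (d (j - 1))"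
    and X: "X \<in> carrier_mat (d 0) n" and Y: "Y \<in> carrier_mat (d L) n"
    and s: "\<forall>j\<in>{1..L}. 0 < s j" and \<alpha>: "0 < \<alpha>" and \<beta>: "\<alpha> * (\<Prod>j=1..L. s j) \<le> b"
  shows "spec_norm (grad_loss L d \<alpha> X Y W i)
    \<le> b / s i * (spec_norm (mat_range d (\<lambda>k. (1 / s k) \<cdot>\<^sub>m W k) L (Suc i))
                  * spec_norm (mat_range d (\<lambda>k. (1 / s k) \<cdot>\<^sub>m W k) (i - 1) 1))
      * (frob_norm (\<alpha> \<cdot>\<^sub>m (mat_range d W L 1 * X) - Y) * frob_norm X)"
proof -
  let ?A = "\<lambda>k. (1 / s k) \<cdot>\<^sub>m W k"
  let ?P = "\<Prod>k=Suc i..L. s k" and ?Q = "\<Prod>k=1..i - 1. s k"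
  let ?nB = "spec_norm (mat_range d ?A L (Suc i))" and ?nC = "spec_norm (mat_range d ?A (i - 1) 1)"
  let ?R = "frob_norm (\<alpha> \<cdot>\<^sub>m (mat_range d W L 1 * X) - Y)"
  have "0 < s i" "0 < ?P" "0 < ?Q"
    using s i by (auto intro!: prod_pos)
  have "spec_norm (mat_range d W L (Suc i)) \<le> ?P * ?nB"
    "spec_norm (mat_range d W (i - 1) 1) \<le> ?Q * ?nC"
    using W s i by (intro spec_norm_mat_range_rescale_le; force)+
  then have "spec_norm (grad_loss L d \<alpha> X Y W i) \<le> \<alpha> * (?P * ?nB * ?R) * (?Q * ?nC * frob_norm X)"
    using spec_norm_grad_loss_le[OF i W X Y less_imp_le[OF \<alpha>]] \<alpha> \<open>0 < ?P\<close> \<open>0 < ?Q\<close>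
    by (elim order_trans) (intro mult_mono mult_left_mono mult_right_mono;
        simp add: frob_norm_nonneg spec_norm_nonneg mult_nonneg_nonneg)
  also have "\<dots> = (\<alpha> * ?P * ?Q) * (?nB * ?nC) * (?R * frob_norm X)"
    by (simp add: mult_ac)
  also have "\<dots> \<le> b / s i * (?nB * ?nC) * (?R * frob_norm X)"
  proof (intro mult_right_mono)
    have "\<alpha> * ?P * ?Q * s i \<le> b"
      using \<beta> prod_atLeastAtMost_split_at[of i 1 L s] i by (simp add: mult_ac)
    then show "\<alpha> * ?P * ?Q \<le> b / s i"
      using \<open>0 < s i\<close> by (simp add: pos_le_divide_eq)
  qed (auto simp: spec_norm_nonneg frob_norm_nonneg)
  finally show ?thesis .
qed

lemma loss_and_gradient_bounds:
  fixes W :: "nat \<Rightarrow> real mat" and s :: "nat \<Rightarrow> real"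
  assumes L: "6 \<le> L" and K: "0 < K" and K': "1 \<le> K'"
    and X: "X \<in> carrier_mat (d 0) n" and Y: "Y \<in> carrier_mat (d L) n"
    and X_le: "frob_norm X \<le> K" and Y_ge: "1 / K \<le> frob_norm Y" and Y_le: "frob_norm Y \<le> K"
    and \<alpha>: "0 < \<alpha>" and s: "\<forall>i\<in>{1..L}. 0 < s i" and \<beta>: "\<alpha> * (\<Prod>i=1..L. s i) \<le> b"
    and W: "\<forall>i\<in>{1..L}. W i \<in> carrier_mat (d i) (d (i - 1))"
    and short: "\<forall>i j. 1 \<le> i \<longrightarrow> i \<le> j \<longrightarrow> j \<le> L \<longrightarrow>
      spec_norm (mat_range d (\<lambda>k. (1 / s k) \<cdot>\<^sub>m W k) j i) \<le> K' * real L ^ 3"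
    and long: "\<forall>i j. 1 \<le> i \<longrightarrow> i \<le> j \<longrightarrow> j \<le> L \<longrightarrow> real L / 4 \<le> real (j - i) \<longrightarrow>
      spec_norm (mat_range d (\<lambda>k. (1 / s k) \<cdot>\<^sub>m W k) j i) \<le> K' * e"
    and small_loss: "20 * b * K' * K^2 * e \<le> 1"
    and small_grad: "2 * b * K'^2 * real L ^ 3 * K^2 * e \<le> \<delta>"
  shows "0.4 * (frob_norm Y)^2 < loss L d \<alpha> X Y W \<and> loss L d \<alpha> X Y W < 0.6 * (frob_norm Y)^2 \<and>
    (\<forall>i\<in>{1..L}. spec_norm (grad_loss L d \<alpha> X Y W i) \<le> \<delta> / s i)"
proof -
  let ?A = "\<lambda>k. (1 / s k) \<cdot>\<^sub>m W k"
  have "spec_norm (mat_range d ?A L 1) \<le> K' * e"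
    using long L by auto
  moreover from this have "0 \<le> K' * e"
    using spec_norm_nonneg[of "mat_range d ?A L 1"] by linarith
  moreover have "0 \<le> b"
    using \<beta> \<alpha> s prod_pos[of "{1..L}" s]
    by (metis atLeastAtMost_iff mult_pos_pos order.strict_trans2 less_imp_le)
  ultimately have "frob_norm (\<alpha> \<cdot>\<^sub>m (mat_range d W L 1 * X)) \<le> b * (K' * e) * K"
    using frob_norm_output_le[OF W X s \<alpha> \<beta>] X_le
    by (elim order_trans) (intro mult_mono mult_left_mono;
        simp add: frob_norm_nonneg spec_norm_nonneg)
  also have "\<dots> \<le> frob_norm Y / 20"
  proof -
    have "20 * (b * (K' * e) * K) * K \<le> 1"
      using small_loss by (simp add: power2_eq_square ac_simps)
    also have "\<dots> \<le> frob_norm Y * K"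
      using Y_ge K by (simp add: field_simps)
    finally show ?thesis
      using K by simp
  qed
  finally have out: "frob_norm (\<alpha> \<cdot>\<^sub>m (mat_range d W L 1 * X)) \<le> frob_norm Y / 20" .
  have WX: "\<alpha> \<cdot>\<^sub>m (mat_range d W L 1 * X) \<in> carrier_mat (d L) n"
    using mat_range_carrier[where i=1 and j=L and A=W and d=d] W X by auto
  have "0 < frob_norm Y"
    using Y_ge K by (metis order_less_le_trans zero_less_divide_1_iff)
  note loss = half_power2_frob_norm_minus_bounds[OF WX Y this out]
  have F: "frob_norm (\<alpha> \<cdot>\<^sub>m (mat_range d W L 1 * X) - Y) * frob_norm X \<le> (2 * K) * K"
    using frob_norm_minus_le[OF WX Y] out Y_le X_le frob_norm_nonneg[of Y] K
    by (intro mult_mono) (auto simp: frob_norm_nonneg)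
  have grad: "spec_norm (grad_loss L d \<alpha> X Y W i) \<le> \<delta> / s i" if i: "1 \<le> i" "i \<le> L" for i
  proof -
    have "0 < s i"
      using s i by simp
    have seg: "spec_norm (mat_range d ?A L (Suc i)) * spec_norm (mat_range d ?A (i - 1) 1)
        \<le> K' * real L ^ 3 * (K' * e)"
      using short long by (intro spec_norm_complementary_segments_le[OF L i K']) auto
    moreover have "0 \<le> K' * real L ^ 3 * (K' * e)"
      using order_trans[OF mult_nonneg_nonneg[OF spec_norm_nonneg spec_norm_nonneg] seg] .
    ultimately have "spec_norm (grad_loss L d \<alpha> X Y W i)
        \<le> b / s i * (K' * real L ^ 3 * (K' * e)) * ((2 * K) * K)"
      using spec_norm_grad_loss_le_rescaled[OF i W X Y s \<alpha> \<beta>] F \<open>0 \<le> b\<close> \<open>0 < s i\<close>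
      by (elim order_trans) (rule mult_mono[OF mult_left_mono];
          simp add: mult_nonneg_nonneg spec_norm_nonneg frob_norm_nonneg)
    also have "\<dots> \<le> \<delta> / s i"
      using divide_right_mono[OF small_grad, of "s i"] \<open>0 < s i\<close>
      by (simp add: power2_eq_square mult_ac)
    finally show ?thesis .
  qed
  show ?thesis
    using loss grad by (simp add: loss_def)
qed

theorem lemma5p4:
  fixes \<gamma> c\<^sub>1 K K' :: real
  assumes "0 < \<gamma>" "\<gamma> \<le> 1" "0 < c\<^sub>1" "1 \<le> K" "1 \<le> K'"
  shows "\<exists>L\<^sub>0::nat. \<forall>L\<ge>L\<^sub>0. \<forall>(d::nat \<Rightarrow> nat) (n::nat) (X::real mat) (Y::real mat) (\<alpha>::real)
      (\<sigma>::nat \<Rightarrow> real) (W::nat \<Rightarrow> real mat).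
    (\<forall>i\<le>L. 0 < d i) \<longrightarrow>
    X \<in> carrier_mat (d 0) n \<longrightarrow> Y \<in> carrier_mat (d L) n \<longrightarrow>
    1 / K \<le> frob_norm X \<longrightarrow> frob_norm X \<le> K \<longrightarrow>
    1 / K \<le> frob_norm Y \<longrightarrow> frob_norm Y \<le> K \<longrightarrow>
    0 < \<alpha> \<longrightarrow> (\<forall>i\<in>{1..L}. 0 < \<sigma> i) \<longrightarrow>
    \<alpha> * (\<Prod>i=1..L. sqrt (real (d i)) * \<sigma> i) \<le> real L powr K \<longrightarrow>
    (\<forall>i\<in>{1..L}. W i \<in> carrier_mat (d i) (d (i - 1))) \<longrightarrow>
    (let A = (\<lambda>i. (1 / (sqrt (real (d i)) * \<sigma> i)) \<cdot>\<^sub>m W i) in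
      (\<forall>i j. 1 \<le> i \<longrightarrow> i \<le> j \<longrightarrow> j \<le> L \<longrightarrow>
         spec_norm (mat_range d A j i) \<le> K' * real L ^ 3) \<and>
      (\<forall>i j. 1 \<le> i \<longrightarrow> i \<le> j \<longrightarrow> j \<le> L \<longrightarrow> real (j - i) \<ge> real L / 4 \<longrightarrow>
         spec_norm (mat_range d A j i) \<le> K' * exp (- c\<^sub>1 * real L powr \<gamma>))) \<longrightarrow>
    0.4 * (frob_norm Y)^2 < loss L d \<alpha> X Y W \<and>
    loss L d \<alpha> X Y W < 0.6 * (frob_norm Y)^2 \<and>
    (\<forall>i\<in>{1..L}. spec_norm (grad_loss L d \<alpha> X Y W i)
        \<le> exp (- 0.9 * c\<^sub>1 * real L powr \<gamma>) / (sqrt (real (d i)) * \<sigma> i))"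
proof -
  have "eventually (\<lambda>L. 6 \<le> L
      \<and> 20 * real L powr K * K' * K^2 * exp (- c\<^sub>1 * real L powr \<gamma>) \<le> 1
      \<and> 2 * real L powr K * K'^2 * real L ^ 3 * K^2 * exp (- c\<^sub>1 * real L powr \<gamma>)
          \<le> exp (- 0.9 * c\<^sub>1 * real L powr \<gamma>)) sequentially"
    using assms by (intro eventually_conj eventually_ge_at_top; real_asymp)
  then obtain L\<^sub>0 where L\<^sub>0: "\<And>L. L\<^sub>0 \<le> L \<Longrightarrow> 6 \<le> L
      \<and> 20 * real L powr K * K' * K^2 * exp (- c\<^sub>1 * real L powr \<gamma>) \<le> 1
      \<and> 2 * real L powr K * K'^2 * real L ^ 3 * K^2 * exp (- c\<^sub>1 * real L powr \<gamma>)
          \<le> exp (- 0.9 * c\<^sub>1 * real L powr \<gamma>)"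
    unfolding eventually_sequentially by blast
  show ?thesis
    unfolding Let_def
    by (intro exI[of _ L\<^sub>0] allI impI, elim conjE, rule loss_and_gradient_bounds)
       (use L\<^sub>0 assms in \<open>auto simp: zero_less_mult_iff\<close>)
qed

end
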